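(* Let $d\in\mathbb N$, let $D\subset\mathbb R_+^d$ be a nonempty convex compact set, and let $\mathcal P\subset\mathbb R_+^d$ be a nonempty convex compact polytope. Then $$\inf_{\alpha\in\mathcal P}\max_{y\in D}\min_{i\in[d]}\frac{y_i}{\alpha_i}=\min_{\alpha\in\mathcal P}\max_{y\in D}\min_{i\in[d]}\frac{y_i}{\alpha_i}.$$ That is, the infimum is attained at some $\alpha\in\mathcal P$.
   Context: A ratio $\frac{y_i}{\alpha_i}$ with $\alpha_i=0$ is defined to be $+\infty$. In particular the inner quantity equals $+\infty$ at $\alpha=0$. *)

theory Defs
  imports "HOL-Analysis.Analysis" "HOL-Library.Extended_Real"
begin

definition ratio :: "real \<Rightarrow> real \<Rightarrow> ereal" where
  "ratio y a = (if a = 0 then \<infinity> else ereal (y / a))"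

definition inner_min :: "real ^ 'n::finite \<Rightarrow> real ^ 'n \<Rightarrow> ereal" where
  "inner_min \<alpha> y = Min (range (\<lambda>i. ratio (y $ i) (\<alpha> $ i)))"

definition outer_max :: "(real ^ 'n::finite) set \<Rightarrow> real ^ 'n \<Rightarrow> ereal" where
  "outer_max D \<alpha> = (SUP y\<in>D. inner_min \<alpha> y)"

definition nonneg_orthant :: "(real ^ 'n::finite) set" where
  "nonneg_orthant = {x. \<forall>i. 0 \<le> x $ i}"

end

theory Submission
  imports Defs
begin

text \<open>The map \<open>\<alpha> \<mapsto> outer_max D \<alpha>\<close> is quasi-concave on the nonnegative orthant: for every
  real \<open>t\<close> the set \<open>C\<^sub>t = {\<alpha>. \<exists>y\<in>D. t \<alpha> \<le> y}\<close> is convex (as \<open>D\<close> is), contains every \<alpha> with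
  \<open>outer_max D \<alpha> > t\<close>, and is contained in \<open>{\<alpha>. outer_max D \<alpha> \<ge> t}\<close>. Hence if all vertices of
  the polytope exceed \<open>t\<close>, so does (weakly) every point of their convex hull, and the infimum
  over the polytope is the minimum over its finitely many vertices.\<close>

lemma ereal_le_inner_min:
  fixes \<alpha> y :: "real ^ 'n::finite"
  assumes "\<forall>i. t * \<alpha>$i \<le> y$i" and "\<forall>i. 0 \<le> \<alpha>$i"
  shows "ereal t \<le> inner_min \<alpha> y"
  unfolding inner_min_def
proof (subst Min_ge_iff)
  show "\<forall>a\<in>range (\<lambda>i. ratio (y $ i) (\<alpha> $ i)). ereal t \<le> a"
  proof
    fix a assume "a \<in> range (\<lambda>i. ratio (y $ i) (\<alpha> $ i))"
    then obtain i where a: "a = ratio (y $ i) (\<alpha> $ i)" by auto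
    show "ereal t \<le> a"
    proof (cases "\<alpha>$i = 0")
      case False
      hence "\<alpha>$i > 0" using assms(2) by (metis less_eq_real_def)
      thus ?thesis using assms(1) by (simp add: a ratio_def pos_le_divide_eq)
    qed (simp add: a ratio_def)
  qed
qed auto

lemma less_inner_minD:
  fixes \<alpha> y :: "real ^ 'n::finite"
  assumes "ereal t < inner_min \<alpha> y" and "\<forall>i. 0 \<le> y$i" and "\<forall>i. 0 \<le> \<alpha>$i"
  shows "t * \<alpha>$i \<le> y$i"
proof -
  have lt: "ereal t < ratio (y $ i) (\<alpha> $ i)"
    using assms(1) unfolding inner_min_def by (subst (asm) Min_gr_iff) auto
  show ?thesis
  proof (cases "\<alpha>$i = 0")
    case False
    hence "\<alpha>$i > 0" using assms(3) by (metis less_eq_real_def)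
    thus ?thesis using lt False by (simp add: ratio_def pos_less_divide_eq)
  qed (use assms(2) in simp)
qed

lemma convex_scaled_dominated:
  fixes D :: "(real ^ 'n::finite) set"
  assumes "convex D"
  shows "convex {b. \<exists>y\<in>D. \<forall>i. t * b$i \<le> y$i}"
  unfolding convex_def
proof (intro allI impI ballI)
  fix b1 b2 and u v :: real
  assume b: "b1 \<in> {b. \<exists>y\<in>D. \<forall>i. t * b$i \<le> y$i}" "b2 \<in> {b. \<exists>y\<in>D. \<forall>i. t * b$i \<le> y$i}"
    and uv: "0 \<le> u" "0 \<le> v" "u + v = 1"
  obtain y1 where y1: "y1 \<in> D" "\<forall>i. t * b1$i \<le> y1$i" using b(1) by auto
  obtain y2 where y2: "y2 \<in> D" "\<forall>i. t * b2$i \<le> y2$i" using b(2) by auto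
  have "u *\<^sub>R y1 + v *\<^sub>R y2 \<in> D" using assms y1(1) y2(1) uv by (rule convexD)
  moreover have "t * (u *\<^sub>R b1 + v *\<^sub>R b2)$i \<le> (u *\<^sub>R y1 + v *\<^sub>R y2)$i" for i
  proof -
    have "u * (t * b1$i) \<le> u * y1$i" using uv(1) y1(2) by (intro mult_left_mono) auto
    moreover have "v * (t * b2$i) \<le> v * y2$i" using uv(2) y2(2) by (intro mult_left_mono) auto
    ultimately show ?thesis by (simp add: algebra_simps)
  qed
  ultimately show "u *\<^sub>R b1 + v *\<^sub>R b2 \<in> {b. \<exists>y\<in>D. \<forall>i. t * b$i \<le> y$i}" by blast
qed

lemma outer_max_convex_hull_lower_bound:
  fixes D V :: "(real ^ 'n::finite) set"
  assumes "convex D" and "D \<subseteq> nonneg_orthant" and "convex hull V \<subseteq> nonneg_orthant"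
    and "\<forall>v\<in>V. ereal t < outer_max D v" and "a \<in> convex hull V"
  shows "ereal t \<le> outer_max D a"
proof -
  define C where "C = {b. \<exists>y\<in>D. \<forall>i. t * b$i \<le> y$i}"
  have "V \<subseteq> C"
  proof
    fix v assume "v \<in> V"
    then obtain y where y: "y \<in> D" "ereal t < inner_min v y"
      using assms(4) unfolding outer_max_def by (auto simp: less_SUP_iff)
    have "v \<in> nonneg_orthant" using \<open>v \<in> V\<close> hull_subset[of V convex] assms(3) by auto
    moreover have "y \<in> nonneg_orthant" using y(1) assms(2) by auto
    ultimately have "t * v$i \<le> y$i" for i
      using less_inner_minD[OF y(2)] unfolding nonneg_orthant_def by simp
    then show "v \<in> C" using y(1) unfolding C_def by blast
  qed
  hence "convex hull V \<subseteq> C"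
    using convex_scaled_dominated[OF assms(1)] unfolding C_def by (rule hull_minimal)
  then obtain y where y: "y \<in> D" "\<forall>i. t * a$i \<le> y$i" using assms(5) C_def by auto
  have "\<forall>i. 0 \<le> a$i" using assms(3,5) unfolding nonneg_orthant_def by blast
  hence "ereal t \<le> inner_min a y" using y(2) by (intro ereal_le_inner_min)
  also have "\<dots> \<le> outer_max D a" unfolding outer_max_def using y(1) by (rule SUP_upper)
  finally show ?thesis .
qed

lemma Min_outer_max_vertices_le:
  fixes D V :: "(real ^ 'n::finite) set"
  assumes "convex D" and "D \<subseteq> nonneg_orthant" and "convex hull V \<subseteq> nonneg_orthant"
    and "finite V" and "a \<in> convex hull V"
  shows "Min (outer_max D ` V) \<le> outer_max D a"
proof (rule ccontr)
  assume "\<not> Min (outer_max D ` V) \<le> outer_max D a"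
  hence "outer_max D a < Min (outer_max D ` V)" by simp
  then obtain t where t: "outer_max D a < ereal t" "ereal t < Min (outer_max D ` V)"
    using ereal_dense2 by blast
  have "V \<noteq> {}" using assms(5) by (metis convex_hull_empty empty_iff)
  with t(2) assms(4) have "\<forall>v\<in>V. ereal t < outer_max D v" by simp
  hence "ereal t \<le> outer_max D a"
    by (rule outer_max_convex_hull_lower_bound[OF assms(1-3) _ assms(5)])
  with t(1) show False by simp
qed

theorem mainTheorem5:
  fixes D P :: "(real ^ 'n::finite) set"
  assumes "D \<noteq> {}" and "convex D" and "compact D" and "D \<subseteq> nonneg_orthant"
    and "P \<noteq> {}" and "polytope P" and "P \<subseteq> nonneg_orthant"
  shows "\<exists>\<alpha>0\<in>P. outer_max D \<alpha>0 = (INF \<alpha>\<in>P. outer_max D \<alpha>)"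
proof -
  obtain V where V: "finite V" "P = convex hull V" using assms(6) unfolding polytope_def by blast
  have "V \<noteq> {}" using assms(5) V(2) by (metis convex_hull_empty)
  hence "Min (outer_max D ` V) \<in> outer_max D ` V" using V(1) by simp
  then obtain v0 where v0: "v0 \<in> V" "outer_max D v0 = Min (outer_max D ` V)" by auto
  have "v0 \<in> P" using v0(1) hull_subset[of V convex] V(2) by auto
  have "outer_max D v0 \<le> outer_max D a" if "a \<in> P" for a
    using Min_outer_max_vertices_le[OF assms(2,4) _ V(1), of a] assms(7) that v0(2)
    unfolding V(2) by simp
  with \<open>v0 \<in> P\<close> have "outer_max D v0 = (INF \<alpha>\<in>P. outer_max D \<alpha>)"
    by (intro antisym INF_greatest INF_lower)
  with \<open>v0 \<in> P\<close> show ?thesis by blast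
qed

end
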